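(* Let $X,Z\in\mathbb{R}^{n\times r}$ with $XX^{T}\ne ZZ^{T}$. Let $Z_{\perp}=(I-XX^{\dagger})Z$ and define $$\alpha=\frac{\|Z_{\perp}Z_{\perp}^{T}\|_{F}}{\|XX^{T}-ZZ^{T}\|_{F}},\qquad\beta=\frac{\sigma_{\min}^{2}(X)}{\|XX^{T}-ZZ^{T}\|_{F}}\cdot\frac{\mathrm{tr}(Z_{\perp}Z_{\perp}^{T})}{\|Z_{\perp}Z_{\perp}^{T}\|_{F}},$$ and $$\delta_{\mathrm{lb}}(X,Z)=\gamma(\alpha,\beta):=\begin{cases}\sqrt{1-\alpha^{2}} & \text{if }\beta\ge\frac{\alpha}{1+\sqrt{1-\alpha^{2}}},\\ \frac{1-2\alpha\beta+\beta^{2}}{1-\beta^{2}} & \text{if }\beta<\frac{\alpha}{1+\sqrt{1-\alpha^{2}}}.\end{cases}$$ Then $\delta(X,Z)\ge\delta_{\mathrm{lb}}(X,Z)$.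
   Context: $A^{\dagger}$ denotes the Moore–Penrose pseudoinverse, $\sigma_{\min}(X)$ the smallest (i.e. $r$-th) singular value of $X\in\mathbb{R}^{n\times r}$. When $Z_{\perp}=0$ (so $\alpha=0$ and $\gamma=1$ regardless), $\beta$ may be taken as $\sigma_{\min}^{2}(X)/\|XX^{T}-ZZ^{T}\|_{F}$. A linear map $\mathcal{A}:\mathbb{R}^{n\times n}\to\mathbb{R}^{m}$ satisfies $(\delta,p)$-RIP if $0\le\delta<1$ and there is $\nu>0$ with $(1-\delta)\|E\|_{F}^{2}\le\frac{1}{\nu}\|\mathcal{A}(E)\|^{2}\le(1+\delta)\|E\|_{F}^{2}$ for all $E\in\mathbb{R}^{n\times n}$ of rank at most $p$. With $r^{\star}=\mathrm{rank}(Z)$, $\delta(X,Z)$ is the infimum of all $\delta$ for which there exist $m\ge1$ and a linear $\mathcal{A}:\mathbb{R}^{n\times n}\to\mathbb{R}^{m}$ satisfying $(\delta,r+r^{\star})$-RIP such that $f_{\mathcal{A}}(U)=\|\mathcal{A}(UU^{T}-ZZ^{T})\|^{2}$ (on $\mathbb{R}^{n\times r}$) satisfies $\nabla f_{\mathcal{A}}(X)=0$ and $\nabla^{2}f_{\mathcal{A}}(X)\succeq0$. *)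

theory Defs
  imports "HOL-Analysis.Analysis"
begin

text \<open>Matrices in R^(n x r) are rendered as real^'r^'n (rows indexed by 'n).
  The norm on real^'c^'b is the Frobenius norm, and the inner product is the
  Frobenius (trace) inner product.\<close>

definition pinv :: "real^'c^'b \<Rightarrow> real^'b^'c" where
  "pinv A = (THE B. A ** B ** A = A \<and> B ** A ** B = B \<and>
       transpose (A ** B) = A ** B \<and> transpose (B ** A) = B ** A)"

definition sigma_min :: "real^'r^'n \<Rightarrow> real" where
  "sigma_min X = sqrt (Min {l. \<exists>v. v \<noteq> 0 \<and> (transpose X ** X) *v v = l *\<^sub>R v})"

text \<open>A linear map A : R^(n x n) -> R^m is represented by a function whose
  components i < m are linear; components i >= m are irrelevant.\<close>
definition is_linmap :: "nat \<Rightarrow> (real^'n^'n \<Rightarrow> nat \<Rightarrow> real) \<Rightarrow> bool" where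
  "is_linmap m A = (\<forall>i<m. linear (\<lambda>E. A E i))"

definition sqn :: "nat \<Rightarrow> (real^'n^'n \<Rightarrow> nat \<Rightarrow> real) \<Rightarrow> real^'n^'n \<Rightarrow> real" where
  "sqn m A E = (\<Sum>i<m. (A E i)\<^sup>2)"

definition RIP :: "real \<Rightarrow> nat \<Rightarrow> nat \<Rightarrow> (real^'n^'n \<Rightarrow> nat \<Rightarrow> real) \<Rightarrow> bool" where
  "RIP d p m A = (0 \<le> d \<and> d < 1 \<and> (\<exists>\<nu>>0. \<forall>E::real^'n^'n. rank E \<le> p \<longrightarrow>
      (1 - d) * (norm E)\<^sup>2 \<le> (1/\<nu>) * sqn m A E \<and> (1/\<nu>) * sqn m A E \<le> (1 + d) * (norm E)\<^sup>2))"

definition fA :: "nat \<Rightarrow> (real^'n^'n \<Rightarrow> nat \<Rightarrow> real) \<Rightarrow> real^'r^'n \<Rightarrow> real^'r^'n \<Rightarrow> real" where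
  "fA m A Z U = sqn m A (U ** transpose U - Z ** transpose Z)"

definition grad :: "('a::real_inner \<Rightarrow> real) \<Rightarrow> 'a \<Rightarrow> 'a" where
  "grad f x = (THE g. (f has_derivative (\<lambda>v. g \<bullet> v)) (at x))"

definition second_order_point :: "('a::real_inner \<Rightarrow> real) \<Rightarrow> 'a \<Rightarrow> bool" where
  "second_order_point f x = ((f has_derivative (\<lambda>v. 0)) (at x) \<and>
     (\<exists>H. (grad f has_derivative H) (at x) \<and> (\<forall>v. 0 \<le> v \<bullet> H v)))"

definition delta :: "real^'r^'n \<Rightarrow> real^'r^'n \<Rightarrow> ereal" where
  "delta X Z = Inf (ereal ` {d. \<exists>m (A :: real^'n^'n \<Rightarrow> nat \<Rightarrow> real). 1 \<le> m \<and> is_linmap m A \<and>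
      RIP d (CARD('r) + rank Z) m A \<and> second_order_point (fA m A Z) X})"

definition gamma :: "real \<Rightarrow> real \<Rightarrow> real" where
  "gamma a b = (if b \<ge> a / (1 + sqrt (1 - a\<^sup>2)) then sqrt (1 - a\<^sup>2)
                else (1 - 2*a*b + b\<^sup>2) / (1 - b\<^sup>2))"

definition Zperp :: "real^'r^'n \<Rightarrow> real^'r^'n \<Rightarrow> real^'r^'n" where
  "Zperp X Z = (mat 1 - X ** pinv X) ** Z"

definition alpha_lb :: "real^'r^'n \<Rightarrow> real^'r^'n \<Rightarrow> real" where
  "alpha_lb X Z = norm (Zperp X Z ** transpose (Zperp X Z)) / norm (X ** transpose X - Z ** transpose Z)"

text \<open>When Z_perp = 0, beta is taken as sigma_min(X)^2 / ||XX^T - ZZ^T||_F.\<close>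
definition beta_lb :: "real^'r^'n \<Rightarrow> real^'r^'n \<Rightarrow> real" where
  "beta_lb X Z = (if Zperp X Z = 0
     then (sigma_min X)\<^sup>2 / norm (X ** transpose X - Z ** transpose Z)
     else (sigma_min X)\<^sup>2 / norm (X ** transpose X - Z ** transpose Z) *
          (trace (Zperp X Z ** transpose (Zperp X Z)) / norm (Zperp X Z ** transpose (Zperp X Z))))"

definition delta_lb :: "real^'r^'n \<Rightarrow> real^'r^'n \<Rightarrow> real" where
  "delta_lb X Z = gamma (alpha_lb X Z) (beta_lb X Z)"

end

theory Submission
  imports Defs
begin

text \<open>Write \<open>E = XX\<^sup>T - ZZ\<^sup>T\<close>, \<open>W = Z\<^sub>\<bottom>Z\<^sub>\<bottom>\<^sup>T\<close> and \<open>P = XX\<^sup>\<dagger>\<close>. At a second-order critical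
  point the gradient of \<open>f\<^sub>A\<close> vanishes, i.e. \<open>\<langle>A E, A T\<rangle> = 0\<close> for every tangent direction
  \<open>T = XV\<^sup>T + VX\<^sup>T\<close>. Since \<open>(I - P)(E + W)(I - P) = 0\<close>, \<open>E + W\<close> is such a direction, so
  \<open>\<langle>A E, A E\<rangle> = -\<langle>A E, A W\<rangle>\<close>; in particular \<open>W \<noteq> 0\<close>. The Hessian in the directions
  \<open>V = z u\<^sup>T\<close>, with \<open>z\<close> a column of \<open>Z\<^sub>\<bottom>\<close> and \<open>u\<close> a unit vector with \<open>|Xu| = \<sigma>\<^sub>m\<^sub>i\<^sub>n(X)\<close>,
  gives \<open>\<langle>A E, A W\<rangle> \<ge> -\<nu>(1 + \<delta>) \<sigma>\<^sub>m\<^sub>i\<^sub>n(X)\<^sup>2 tr W\<close>. Every matrix in the span of \<open>E\<close> and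
  \<open>W\<close> has rank at most \<open>r + rank Z\<close>, so RIP holds on that plane, where \<open>\<langle>E, W\<rangle> = -|W|\<^sup>2\<close>.
  In the coordinates \<open>E/|E|\<close>, \<open>W/|W|\<close> this is a two-dimensional problem in \<open>\<alpha>\<close> and \<open>\<beta>\<close>,
  whose solution is \<open>\<gamma>(\<alpha>, \<beta>)\<close>.\<close>

lemma matrix_add_rdistrib: "((A::real^'n^'m) + B) ** C = A ** C + B ** C"
  by (simp add: matrix_matrix_mult_def vec_eq_iff sum.distrib algebra_simps)

lemma matrix_diff_ldistrib: "(A::real^'n^'m) ** (B - C) = A ** B - A ** C"
  by (simp add: matrix_matrix_mult_def vec_eq_iff sum_subtractf algebra_simps)

lemma matrix_diff_rdistrib: "((A::real^'n^'m) - B) ** C = A ** C - B ** C"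
  by (simp add: matrix_matrix_mult_def vec_eq_iff sum_subtractf algebra_simps)

lemma transpose_add: "transpose ((A::real^'n^'m) + B) = transpose A + transpose B"
  by (simp add: transpose_def vec_eq_iff)

lemma transpose_diff: "transpose ((A::real^'n^'m) - B) = transpose A - transpose B"
  by (simp add: transpose_def vec_eq_iff)

lemma inner_matrix_mul_left: "((A::real^'n^'m) ** B) \<bullet> C = B \<bullet> (transpose A ** C)"
proof -
  have "(A ** B) \<bullet> C = (\<Sum>i\<in>UNIV. \<Sum>j\<in>UNIV. \<Sum>k\<in>UNIV. A$i$k * B$k$j * C$i$j)"
    by (simp add: inner_vec_def matrix_matrix_mult_def sum_distrib_right)
  also have "\<dots> = (\<Sum>i\<in>UNIV. \<Sum>k\<in>UNIV. \<Sum>j\<in>UNIV. A$i$k * B$k$j * C$i$j)"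
    by (rule sum.cong[OF refl], rule sum.swap)
  also have "\<dots> = (\<Sum>k\<in>UNIV. \<Sum>j\<in>UNIV. \<Sum>i\<in>UNIV. A$i$k * B$k$j * C$i$j)"
    by (subst sum.swap) (rule sum.cong[OF refl], rule sum.swap)
  also have "\<dots> = B \<bullet> (transpose A ** C)"
    by (simp add: inner_vec_def matrix_matrix_mult_def transpose_def sum_distrib_left mult_ac)
  finally show ?thesis .
qed

lemma inner_matrix_mul_right: "((A::real^'n^'m) ** B) \<bullet> C = A \<bullet> (C ** transpose B)"
proof -
  have "(A ** B) \<bullet> C = (\<Sum>i\<in>UNIV. \<Sum>j\<in>UNIV. \<Sum>k\<in>UNIV. A$i$k * B$k$j * C$i$j)"
    by (simp add: inner_vec_def matrix_matrix_mult_def sum_distrib_right)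
  also have "\<dots> = (\<Sum>i\<in>UNIV. \<Sum>k\<in>UNIV. \<Sum>j\<in>UNIV. A$i$k * B$k$j * C$i$j)"
    by (rule sum.cong[OF refl], rule sum.swap)
  also have "\<dots> = A \<bullet> (C ** transpose B)"
    by (simp add: inner_vec_def matrix_matrix_mult_def transpose_def sum_distrib_left mult_ac)
  finally show ?thesis .
qed

lemma inner_symmetric_idempotent_sandwich:
  fixes Q M :: "real^'n^'n"
  assumes "transpose Q = Q" "Q ** Q = Q"
  shows "M \<bullet> (Q ** M ** Q) = (norm (Q ** M ** Q))\<^sup>2"
proof -
  have "(Q ** M ** Q) \<bullet> (Q ** M ** Q) = (Q ** M) \<bullet> (Q ** M ** Q ** transpose Q)"
    by (rule inner_matrix_mul_right)
  also have "\<dots> = M \<bullet> (transpose Q ** (Q ** M ** Q))"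
    using assms by (simp add: inner_matrix_mul_left matrix_mul_assoc[symmetric])
  also have "\<dots> = M \<bullet> (Q ** M ** Q)"
    using assms by (simp add: matrix_mul_assoc)
  finally show ?thesis by (simp add: power2_norm_eq_inner)
qed

lemma power2_norm_scaleR_add:
  fixes M N :: "'a::real_inner"
  shows "(norm (s *\<^sub>R M + t *\<^sub>R N))\<^sup>2 = s\<^sup>2 * (norm M)\<^sup>2 + 2 * s * t * (M \<bullet> N) + t\<^sup>2 * (norm N)\<^sup>2"
  unfolding power2_norm_eq_inner
  by (simp add: inner_add_left inner_add_right inner_commute algebra_simps power2_eq_square)

lemma inner_transpose_mul_self:
  "v \<bullet> ((transpose X ** X) *v w) = (X *v v) \<bullet> ((X::real^'r^'n) *v w)"
proof -
  have "v \<bullet> ((transpose X ** X) *v w) = (transpose X *v (X *v w)) \<bullet> v"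
    by (simp only: matrix_vector_mul_assoc inner_commute)
  also have "\<dots> = (X *v w) \<bullet> (X *v v)"
    by (simp add: dot_lmul_matrix)
  finally show ?thesis
    by (simp add: inner_commute)
qed

lemma symmetric_matrix_inner:
  fixes M :: "real^'n^'n"
  assumes "transpose M = M"
  shows "(M *v x) \<bullet> y = x \<bullet> (M *v y)"
  by (metis assms dot_lmul_matrix inner_commute vector_transpose_matrix)

lemma matrix_linear_apply:
  fixes f :: "real^'n \<Rightarrow> real^'m"
  assumes "linear f"
  shows "matrix f *v x = f x"
  using fun_cong[OF matrix_vector_mul(2)[OF assms]] by simp

lemma matrix_symmetric_of_self_adjoint:
  fixes f :: "real^'n \<Rightarrow> real^'n"
  assumes "linear f" "\<And>x y. f x \<bullet> y = x \<bullet> f y"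
  shows "transpose (matrix f) = matrix f"
  by (metis adjoint_unique assms matrix_adjoint)

definition outer :: "real^'a \<Rightarrow> real^'b \<Rightarrow> real^'b^'a" where
  "outer a b = (\<chi> i j. a$i * b$j)"

lemma transpose_outer: "transpose (outer a b) = outer b a"
  by (simp add: outer_def transpose_def vec_eq_iff mult.commute)

lemma matrix_mul_outer: "(A::real^'a^'c) ** outer a b = outer (A *v a) b"
  by (simp add: outer_def vec_eq_iff matrix_matrix_mult_def matrix_vector_mult_def
      sum_distrib_right mult.assoc)

lemma outer_mul_transpose: "outer a b ** transpose (A::real^'b^'c) = outer a (A *v b)"
  by (simp add: outer_def vec_eq_iff matrix_matrix_mult_def matrix_vector_mult_def transpose_def
      sum_distrib_left mult_ac)

lemma outer_mul_outer: "outer a b ** outer c d = (b \<bullet> c) *\<^sub>R outer a d"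
  by (simp add: outer_def vec_eq_iff matrix_matrix_mult_def inner_vec_def
      sum_distrib_left sum_distrib_right mult_ac)

lemma inner_outer: "outer a b \<bullet> outer c d = (a \<bullet> c) * (b \<bullet> d)"
  by (simp add: outer_def inner_vec_def sum_product mult_ac) (rule sum.swap)

lemma norm_outer_plus_transpose:
  assumes "x \<bullet> y = 0"
  shows "(norm (outer x y + outer y x))\<^sup>2 = 2 * (norm x)\<^sup>2 * (norm y)\<^sup>2"
  using assms
  by (simp add: power2_norm_eq_inner inner_add_left inner_add_right inner_outer inner_commute)

lemma sum_outer_columns:
  "(\<Sum>k\<in>UNIV. outer (M *v axis k 1) (M *v axis k 1)) = (M::real^'r^'n) ** transpose M"
  by (simp add: vec_eq_iff outer_def matrix_vector_mult_basis column_def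
      matrix_matrix_mult_def transpose_def)

lemma trace_mul_transpose:
  "trace ((M::real^'r^'n) ** transpose M) = (\<Sum>k\<in>UNIV. (norm (M *v axis k 1))\<^sup>2)"
proof -
  have "trace (M ** transpose M) = (\<Sum>i\<in>UNIV. \<Sum>k\<in>UNIV. M$i$k * M$i$k)"
    by (simp add: trace_def matrix_matrix_mult_def transpose_def)
  also have "\<dots> = (\<Sum>k\<in>UNIV. \<Sum>i\<in>UNIV. M$i$k * M$i$k)"
    by (rule sum.swap)
  finally show ?thesis
    by (simp add: power2_norm_eq_inner inner_vec_def matrix_vector_mult_basis column_def)
qed

section \<open>The Moore--Penrose pseudoinverse\<close>

definition moore_penrose :: "real^'r^'n \<Rightarrow> real^'n^'r \<Rightarrow> bool" where
  "moore_penrose X B \<longleftrightarrow> X ** B ** X = X \<and> B ** X ** B = B \<and>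
     transpose (X ** B) = X ** B \<and> transpose (B ** X) = B ** X"

lemma moore_penrose_unique:
  assumes "moore_penrose X B1" "moore_penrose X B2"
  shows "B1 = B2"
proof -
  have a1: "X ** B1 ** X = X" "B1 ** X ** B1 = B1" "transpose (X ** B1) = X ** B1"
      "transpose (B1 ** X) = B1 ** X"
    using assms(1) by (auto simp: moore_penrose_def)
  have a2: "X ** B2 ** X = X" "B2 ** X ** B2 = B2" "transpose (X ** B2) = X ** B2"
      "transpose (B2 ** X) = B2 ** X"
    using assms(2) by (auto simp: moore_penrose_def)
  have t2: "transpose X = transpose X ** X ** B2"
  proof -
    have "transpose X = transpose (X ** B2 ** X)" using a2 by simp
    also have "\<dots> = transpose X ** transpose (X ** B2)" by (simp add: matrix_transpose_mul)
    also have "\<dots> = transpose X ** X ** B2" using a2 by (simp add: matrix_mul_assoc)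
    finally show ?thesis .
  qed
  have t1: "transpose X = B1 ** X ** transpose X"
  proof -
    have "transpose X = transpose (X ** B1 ** X)" using a1 by simp
    also have "\<dots> = transpose (B1 ** X) ** transpose X"
      by (simp add: matrix_transpose_mul matrix_mul_assoc)
    also have "\<dots> = B1 ** X ** transpose X" using a1 by simp
    finally show ?thesis .
  qed
  have "B1 = B1 ** transpose (X ** B1)"
    using a1 by (simp add: matrix_mul_assoc)
  also have "\<dots> = B1 ** transpose B1 ** (transpose X ** X ** B2)"
    using t2 by (simp add: matrix_transpose_mul matrix_mul_assoc)
  also have "\<dots> = B1 ** transpose (X ** B1) ** X ** B2"
    by (simp add: matrix_transpose_mul matrix_mul_assoc)
  also have "\<dots> = B1 ** X ** B2"
    using a1 by (simp add: matrix_mul_assoc)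
  finally have e1: "B1 = B1 ** X ** B2" .
  have "B2 = transpose (B2 ** X) ** B2"
    using a2 by simp
  also have "\<dots> = transpose X ** transpose B2 ** B2"
    by (simp add: matrix_transpose_mul)
  also have "\<dots> = B1 ** X ** transpose (B2 ** X) ** B2"
    using t1 by (metis matrix_transpose_mul matrix_mul_assoc)
  also have "\<dots> = B1 ** X ** B2"
    using a2 by (metis matrix_mul_assoc)
  finally show ?thesis using e1 by simp
qed

lemma orthogonal_projection_exists:
  fixes S :: "'a::euclidean_space set"
  assumes "subspace S"
  obtains p where "linear p" "\<And>y. p y \<in> S" "\<And>c. c \<in> S \<Longrightarrow> p c = c"
    "\<And>y z. p y \<bullet> z = y \<bullet> p z"
proof -
  obtain B where B: "B \<subseteq> S" "pairwise orthogonal B" "\<And>x. x \<in> B \<Longrightarrow> norm x = 1"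
      "independent B" "span B = S"
    using orthonormal_basis_subspace[OF assms] by metis
  have "finite B" using B(4) by (rule independent_imp_finite)
  define p where "p y = (\<Sum>b\<in>B. (b \<bullet> y) *\<^sub>R b)" for y
  have "linear p"
    by (rule linearI) (simp_all add: p_def inner_add_right scaleR_add_left sum.distrib
        scaleR_sum_right)
  have p_in: "p y \<in> S" for y
    unfolding p_def using B(1) by (intro subspace_sum[OF assms] subspace_scale[OF assms]) auto
  have orth_basis: "orthogonal (y - p y) b" if "b \<in> B" for y b
  proof -
    have "p y \<bullet> b = (\<Sum>b'\<in>B. (b' \<bullet> y) * (b' \<bullet> b))"
      by (simp add: p_def inner_sum_left)
    also have "\<dots> = (\<Sum>b'\<in>B. if b' = b then b \<bullet> y else 0)"
      using B(2,3) that
      by (intro sum.cong) (auto simp: pairwise_def orthogonal_def dot_square_norm)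
    also have "\<dots> = y \<bullet> b"
      using \<open>finite B\<close> that by (simp add: inner_commute)
    finally show ?thesis
      by (simp add: orthogonal_def inner_diff_left)
  qed
  have p_id: "p c = c" if "c \<in> S" for c
  proof -
    have "c - p c \<in> span B"
      using B(5) that p_in assms by (simp add: subspace_diff)
    then have "orthogonal (c - p c) (c - p c)"
      using orth_basis by (rule orthogonal_to_span)
    then show ?thesis by (simp add: orthogonal_self)
  qed
  have "p y \<bullet> z = y \<bullet> p z" for y z
    by (simp add: p_def inner_sum_left inner_sum_right mult.commute inner_commute)
  with \<open>linear p\<close> p_in p_id show ?thesis by (rule that)
qed

lemma matrix_vector_mult_rowspace_projection:
  fixes X :: "real^'r^'n"
  assumes id: "\<And>c. c \<in> span (rows X) \<Longrightarrow> q c = c" and sym: "\<And>y z. q y \<bullet> z = y \<bullet> q z"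
  shows "X *v q x = X *v x"
proof -
  have "(X *v (x - q x)) $ i = 0" for i
  proof -
    have "row i X \<in> span (rows X)"
      unfolding rows_def by (auto intro: span_base)
    then have "(x - q x) \<bullet> row i X = 0"
      using sym[of x "row i X"] id by (simp add: inner_diff_left)
    then show ?thesis
      by (simp add: matrix_vector_mul_component row_def inner_commute)
  qed
  then show ?thesis
    by (simp add: vec_eq_iff matrix_vector_mult_diff_distrib)
qed

text \<open>The pseudoinverse is \<open>g \<circ> p\<close>, where \<open>p\<close> projects orthogonally onto the column space
  of \<open>X\<close> and \<open>g\<close> inverts \<open>X\<close> on its row space; \<open>X B\<close> and \<open>B X\<close> are then the orthogonal
  projectors onto the column and the row space.\<close>

lemma moore_penrose_exists: "\<exists>B. moore_penrose (X::real^'r^'n) B"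
proof -
  define Rs where "Rs = span (rows X)"
  define Cs where "Cs = range (\<lambda>x. X *v x)"
  have "subspace Cs"
    unfolding Cs_def by (auto intro: real_vector.linear_subspace_image)
  obtain p where p: "linear p" "\<And>y. p y \<in> Cs" "\<And>c. c \<in> Cs \<Longrightarrow> p c = c"
      "\<And>y z. p y \<bullet> z = y \<bullet> p z"
    using orthogonal_projection_exists[OF \<open>subspace Cs\<close>] by blast
  obtain q where q: "linear q" "\<And>y. q y \<in> Rs" "\<And>c. c \<in> Rs \<Longrightarrow> q c = c"
      "\<And>y z. q y \<bullet> z = y \<bullet> q z"
    using orthogonal_projection_exists[of Rs] unfolding Rs_def by blast
  have "subspace Rs" "inj_on (\<lambda>x. X *v x) Rs"
    unfolding Rs_def by (auto intro: inj_onI matrix_vector_mul_injective_on_rowspace)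
  then obtain g where g: "range g \<subseteq> Rs" "linear g" "\<And>v. v \<in> Rs \<Longrightarrow> g (X *v v) = v"
    using real_vector.linear_exists_left_inverse_on[OF matrix_vector_mul_linear \<open>subspace Rs\<close>]
    by blast
  have X_q: "X *v q x = X *v x" for x
    using q(3,4) unfolding Rs_def by (rule matrix_vector_mult_rowspace_projection)
  define B where "B = matrix (g \<circ> p)"
  have B: "B *v y = g (p y)" for y
    using matrix_linear_apply[OF linear_compose[OF p(1) g(2)]] by (simp add: B_def)
  have XB: "X *v (B *v y) = p y" for y
  proof -
    obtain w where w: "p y = X *v w"
      using p(2)[of y] by (auto simp: Cs_def)
    have "X *v (B *v y) = X *v g (X *v q w)"
      using w X_q[of w] by (simp add: B)
    also have "\<dots> = X *v q w"
      by (simp add: g(3)[OF q(2)])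
    also have "\<dots> = p y"
      using w X_q[of w] by simp
    finally show ?thesis .
  qed
  have BX: "B *v (X *v x) = q x" for x
  proof -
    have "B *v (X *v x) = g (X *v q x)"
      using p(3)[of "X *v x"] X_q[of x] by (simp add: B Cs_def)
    also have "\<dots> = q x"
      by (rule g(3)[OF q(2)])
    finally show ?thesis .
  qed
  have "X ** B = matrix p" "B ** X = matrix q"
    using XB BX
    by (simp_all add: matrix_eq matrix_linear_apply[OF p(1)] matrix_linear_apply[OF q(1)]
        matrix_vector_mul_assoc[symmetric])
  moreover have "X ** B ** X = X"
    using XB p(3) by (simp add: matrix_eq matrix_vector_mul_assoc[symmetric] Cs_def)
  moreover have "B ** X ** B = B"
    using BX q(3) g(1) by (simp add: matrix_eq matrix_vector_mul_assoc[symmetric] B range_subsetD)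
  ultimately have "moore_penrose X B"
    unfolding moore_penrose_def
    using matrix_symmetric_of_self_adjoint[OF p(1,4)] matrix_symmetric_of_self_adjoint[OF q(1,4)]
    by simp
  then show ?thesis ..
qed

lemma moore_penrose_pinv: "moore_penrose X (pinv X)"
proof -
  obtain B where "moore_penrose X B"
    using moore_penrose_exists by blast
  then have "moore_penrose X (THE B. moore_penrose X B)"
    by (metis moore_penrose_unique theI)
  then show ?thesis
    by (simp add: pinv_def moore_penrose_def)
qed

lemma pinv_projector:
  fixes X :: "real^'r^'n"
  shows "transpose (X ** pinv X) = X ** pinv X" "X ** pinv X ** X = X"
    "(X ** pinv X) ** (X ** pinv X) = X ** pinv X"
  using moore_penrose_pinv[of X] by (auto simp: moore_penrose_def matrix_mul_assoc)

definition perp_proj :: "real^'r^'n \<Rightarrow> real^'n^'n" where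
  "perp_proj X = mat 1 - X ** pinv X"

lemma perp_proj_symmetric: "transpose (perp_proj X) = perp_proj X"
  by (simp add: perp_proj_def transpose_diff pinv_projector)

lemma perp_proj_idempotent: "perp_proj X ** perp_proj X = perp_proj X"
  by (simp add: perp_proj_def matrix_diff_ldistrib matrix_diff_rdistrib pinv_projector)

lemma perp_proj_mul: "perp_proj X ** X = 0"
  by (simp add: perp_proj_def matrix_diff_rdistrib pinv_projector)

lemma transpose_mul_perp_proj: "transpose X ** perp_proj X = 0"
proof -
  have "transpose X ** perp_proj X = transpose (perp_proj X ** X)"
    by (simp add: matrix_transpose_mul perp_proj_symmetric)
  then show ?thesis
    by (simp add: perp_proj_mul transpose_def vec_eq_iff)
qed

lemma transpose_mul_Zperp: "transpose X ** Zperp X Z = 0"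
  by (simp add: Zperp_def perp_proj_def[symmetric] matrix_mul_assoc transpose_mul_perp_proj)

lemma perp_proj_mul_Zperp: "perp_proj X ** Zperp X Z = Zperp X Z"
  by (simp add: Zperp_def perp_proj_def[symmetric] matrix_mul_assoc perp_proj_idempotent)

lemma perp_proj_sandwich:
  fixes X Z :: "real^'r^'n"
  shows "perp_proj X ** (X ** transpose X - Z ** transpose Z) ** perp_proj X
    = - (Zperp X Z ** transpose (Zperp X Z))"
proof -
  have "perp_proj X ** (X ** transpose X) ** perp_proj X = 0"
    by (simp add: matrix_mul_assoc perp_proj_mul)
  then show ?thesis
    by (simp add: Zperp_def perp_proj_def[symmetric] matrix_diff_ldistrib matrix_diff_rdistrib
        matrix_transpose_mul perp_proj_symmetric matrix_mul_assoc)
qed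

lemma inner_Zperp_outer:
  fixes X Z :: "real^'r^'n"
  shows "(X ** transpose X - Z ** transpose Z) \<bullet> (Zperp X Z ** transpose (Zperp X Z))
    = - (norm (Zperp X Z ** transpose (Zperp X Z)))\<^sup>2"
  using inner_symmetric_idempotent_sandwich[OF perp_proj_symmetric[of X] perp_proj_idempotent,
      of "X ** transpose X - Z ** transpose Z"]
  by (simp add: perp_proj_sandwich)

lemma norm_Zperp_outer_le:
  fixes X Z :: "real^'r^'n"
  shows "norm (Zperp X Z ** transpose (Zperp X Z)) \<le> norm (X ** transpose X - Z ** transpose Z)"
proof -
  define E where "E = X ** transpose X - Z ** transpose Z"
  define W where "W = Zperp X Z ** transpose (Zperp X Z)"
  have "0 \<le> (norm (E + W))\<^sup>2"
    by simp
  also have "\<dots> = (norm E)\<^sup>2 - (norm W)\<^sup>2"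
    using inner_Zperp_outer[of X Z] unfolding E_def[symmetric] W_def[symmetric]
    by (simp add: power2_norm_eq_inner inner_add_left inner_add_right inner_commute)
  finally show ?thesis
    unfolding E_def W_def by (simp add: power2_le_iff_abs_le)
qed

lemma tangent_of_perp_sandwich_zero:
  fixes X :: "real^'r^'n" and M :: "real^'n^'n"
  assumes M_sym: "transpose M = M" and "perp_proj X ** M ** perp_proj X = 0"
  shows "\<exists>V. M = X ** transpose V + V ** transpose X"
proof -
  define P where "P = X ** pinv X"
  have P_sym: "transpose P = P"
    unfolding P_def by (rule pinv_projector(1))
  have M_eq: "M = P ** M + M ** P - P ** M ** P"
    using assms(2)
    by (simp add: perp_proj_def P_def[symmetric] matrix_diff_ldistrib matrix_diff_rdistrib
        matrix_mul_assoc algebra_simps)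
  define V where "V = (M - (1/2) *\<^sub>R (P ** M)) ** transpose (pinv X)"
  have tV: "transpose V = pinv X ** (M - (1/2) *\<^sub>R (M ** P))"
    by (simp add: V_def matrix_transpose_mul transpose_diff transpose_scalar M_sym P_sym)
  have "X ** transpose V = P ** M - (1/2) *\<^sub>R (P ** M ** P)"
    by (simp add: tV P_def matrix_diff_ldistrib matrix_scalar_ac scalar_matrix_assoc
        matrix_mul_assoc)
  moreover have "V ** transpose X = M ** P - (1/2) *\<^sub>R (P ** M ** P)"
  proof -
    have "V ** transpose X = (M - (1/2) *\<^sub>R (P ** M)) ** transpose P"
      by (simp add: V_def P_def matrix_transpose_mul matrix_mul_assoc)
    then show ?thesis
      by (simp add: P_sym matrix_diff_rdistrib scalar_matrix_assoc[symmetric])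
  qed
  ultimately have "X ** transpose V + V ** transpose X
      = (P ** M - (1/2) *\<^sub>R (P ** M ** P)) + (M ** P - (1/2) *\<^sub>R (P ** M ** P))"
    by simp
  also have "\<dots> = P ** M + M ** P - P ** M ** P"
    by (simp add: algebra_simps)
  also have "\<dots> = M"
    using M_eq by simp
  finally show ?thesis by metis
qed

section \<open>Matrices with columns in \<open>col X + col Z\<close>\<close>

lemma rank_add_le: "rank ((A::real^'n^'m) + B) \<le> rank A + rank B"
proof -
  define RA where "RA = range (\<lambda>x. A *v x)"
  define RB where "RB = range (\<lambda>x. B *v x)"
  have "subspace RA" "subspace RB"
    unfolding RA_def RB_def by (auto intro: real_vector.linear_subspace_image)
  have "range (\<lambda>x. (A + B) *v x) \<subseteq> {x + y |x y. x \<in> RA \<and> y \<in> RB}"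
    by (auto simp: RA_def RB_def matrix_vector_mult_add_rdistrib)
  then have "rank (A + B) \<le> dim {x + y |x y. x \<in> RA \<and> y \<in> RB}"
    unfolding rank_dim_range by (rule dim_subset)
  also have "\<dots> \<le> dim RA + dim RB"
    using dim_sums_Int[OF \<open>subspace RA\<close> \<open>subspace RB\<close>] by linarith
  finally show ?thesis by (simp add: rank_dim_range RA_def RB_def)
qed

definition col_sum_matrices :: "real^'r^'n \<Rightarrow> real^'r^'n \<Rightarrow> (real^'n^'n) set" where
  "col_sum_matrices X Z = {X ** B + Z ** C | B C. True}"

lemma subspace_col_sum_matrices:
  fixes X Z :: "real^'r^'n"
  shows "subspace (col_sum_matrices X Z)"
  unfolding subspace_def col_sum_matrices_def
proof (intro conjI ballI allI)
  show "0 \<in> {X ** B + Z ** C |B C. True}"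
    by (rule CollectI, rule exI[of _ 0], rule exI[of _ 0]) simp
next
  fix M N :: "real^'n^'n"
  assume "M \<in> {X ** B + Z ** C |B C. True}" "N \<in> {X ** B + Z ** C |B C. True}"
  then obtain B1 C1 B2 C2 where "M = X ** B1 + Z ** C1" "N = X ** B2 + Z ** C2"
    by blast
  then have "M + N = X ** (B1 + B2) + Z ** (C1 + C2)"
    by (simp add: matrix_add_ldistrib algebra_simps)
  then show "M + N \<in> {X ** B + Z ** C |B C. True}"
    by blast
next
  fix c :: real and M :: "real^'n^'n"
  assume "M \<in> {X ** B + Z ** C |B C. True}"
  then obtain B C where "M = X ** B + Z ** C"
    by blast
  then have "c *\<^sub>R M = X ** (c *\<^sub>R B) + Z ** (c *\<^sub>R C)"
    by (simp add: scaleR_add_right matrix_scalar_ac scalar_matrix_assoc)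
  then show "c *\<^sub>R M \<in> {X ** B + Z ** C |B C. True}"
    by blast
qed

lemma col_sum_matrices_left: "X ** B \<in> col_sum_matrices X Z"
  unfolding col_sum_matrices_def by (rule CollectI, rule exI[of _ B], rule exI[of _ 0]) simp

lemma col_sum_matrices_right: "Z ** C \<in> col_sum_matrices X Z"
  unfolding col_sum_matrices_def by (rule CollectI, rule exI[of _ 0], rule exI[of _ C]) simp

lemma col_sum_matrices_Zperp: "Zperp X Z ** C \<in> col_sum_matrices X Z"
proof -
  have "Zperp X Z ** C = Z ** C - X ** (pinv X ** Z ** C)"
    by (simp add: Zperp_def matrix_diff_rdistrib matrix_mul_assoc)
  then show ?thesis
    using subspace_diff[OF subspace_col_sum_matrices col_sum_matrices_right col_sum_matrices_left]
    by simp
qed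

lemma rank_col_sum_matrices:
  fixes X Z :: "real^'r^'n"
  assumes "M \<in> col_sum_matrices X Z"
  shows "rank M \<le> CARD('r) + rank Z"
proof -
  obtain B C where M: "M = X ** B + Z ** C"
    using assms by (auto simp: col_sum_matrices_def)
  have "rank M \<le> rank (X ** B) + rank (Z ** C)"
    unfolding M by (rule rank_add_le)
  also have "rank (X ** B) \<le> CARD('r)"
    using rank_mul_le_left[of X B] rank_bound[of X] by simp
  also have "rank (Z ** C) \<le> rank Z"
    by (rule rank_mul_le_left)
  finally show ?thesis by simp
qed

lemma psd_form_zero_imp_kernel:
  fixes N :: "'a::real_inner \<Rightarrow> 'a"
  assumes lin: "linear N" and sym: "\<And>x y. N x \<bullet> y = x \<bullet> N y"
    and psd: "\<And>w. 0 \<le> w \<bullet> N w" and zero: "v \<bullet> N v = 0"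
  shows "N v = 0"
proof (rule ccontr)
  define a where "a = N v"
  define c where "c = a \<bullet> N a"
  assume "N v \<noteq> 0"
  then have a_pos: "0 < a \<bullet> a"
    by (simp add: a_def)
  have c_nonneg: "0 \<le> c"
    unfolding c_def by (rule psd)
  have along: "0 \<le> 2 * t * (a \<bullet> a) + t\<^sup>2 * c" for t
  proof -
    have "0 \<le> (v + t *\<^sub>R a) \<bullet> N (v + t *\<^sub>R a)"
      by (rule psd)
    also have "\<dots> = v \<bullet> N v + t * (a \<bullet> N v) + t * (v \<bullet> N a) + t\<^sup>2 * (a \<bullet> N a)"
      by (simp add: linear_add[OF lin] linear_scale[OF lin] inner_add_left inner_add_right
          power2_eq_square algebra_simps)
    also have "\<dots> = 2 * t * (a \<bullet> a) + t\<^sup>2 * c"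
      using zero sym[of v a] by (simp add: a_def c_def inner_commute)
    finally show ?thesis .
  qed
  define t where "t = - (a \<bullet> a) / (c + 1)"
  have tc: "t * (c + 1) = - (a \<bullet> a)"
    using c_nonneg by (simp add: t_def)
  have "(c + 1)\<^sup>2 * (2 * t * (a \<bullet> a) + t\<^sup>2 * c)
      = 2 * (a \<bullet> a) * (t * (c + 1)) * (c + 1) + (t * (c + 1))\<^sup>2 * c"
    by (simp add: power2_eq_square algebra_simps)
  also have "\<dots> = - (a \<bullet> a)\<^sup>2 * (c + 2)"
    unfolding tc by (simp add: power2_eq_square algebra_simps)
  also have "\<dots> < 0"
    using a_pos c_nonneg by simp
  finally show False
    using along[of t] by (simp add: mult_less_0_iff)
qed

lemma symmetric_matrix_has_eigenvector:
  fixes M :: "real^'n^'n"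
  assumes M_sym: "transpose M = M"
  shows "\<exists>l v. v \<noteq> 0 \<and> M *v v = l *\<^sub>R v"
proof -
  define q where "q v = v \<bullet> (M *v v)" for v
  have cont: "continuous_on (sphere 0 1) q"
    unfolding q_def
    by (intro continuous_intros bounded_linear.continuous_on[OF matrix_vector_mul_bounded_linear])
  obtain v0 where v0: "v0 \<in> sphere (0::real^'n) 1" "\<And>y. y \<in> sphere 0 1 \<Longrightarrow> q v0 \<le> q y"
    using continuous_attains_inf[OF compact_sphere _ cont] by (auto simp: sphere_eq_empty)
  define N where "N w = M *v w - q v0 *\<^sub>R w" for w
  have "linear N"
    by (rule linearI)
      (simp_all add: N_def matrix_vector_right_distrib matrix_vector_mult_scaleR algebra_simps)
  moreover have "N x \<bullet> y = x \<bullet> N y" for x y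
    using symmetric_matrix_inner[OF M_sym, of x y]
    by (simp add: N_def inner_diff_left inner_diff_right inner_commute)
  moreover have "0 \<le> w \<bullet> N w" for w
  proof (cases "w = 0")
    case False
    define u where "u = (1 / norm w) *\<^sub>R w"
    have "u \<in> sphere 0 1"
      using False by (simp add: u_def)
    then have "q v0 \<le> q u"
      by (rule v0(2))
    also have "q u = q w / (norm w)\<^sup>2"
      by (simp add: u_def q_def matrix_vector_mult_scaleR power2_eq_square divide_inverse)
    finally have "q v0 * (norm w)\<^sup>2 \<le> q w"
      using False by (simp add: field_simps)
    then show ?thesis
      by (simp add: N_def q_def inner_diff_right dot_square_norm)
  qed (simp add: N_def)
  moreover have "v0 \<bullet> N v0 = 0"
    using v0(1) by (simp add: N_def q_def inner_diff_right dot_square_norm)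
  ultimately have "N v0 = 0"
    by (rule psd_form_zero_imp_kernel)
  moreover have "v0 \<noteq> 0"
    using v0(1) by auto
  ultimately show ?thesis
    unfolding N_def by auto
qed

lemma symmetric_matrix_eigenvalues_finite:
  fixes M :: "real^'n^'n"
  assumes M_sym: "transpose M = M"
  shows "finite {l. \<exists>v. v \<noteq> 0 \<and> M *v v = l *\<^sub>R v}" (is "finite ?S")
proof -
  define f where "f l = (SOME v. v \<noteq> 0 \<and> M *v v = l *\<^sub>R v)" for l
  have f: "f l \<noteq> 0 \<and> M *v f l = l *\<^sub>R f l" if "l \<in> ?S" for l
  proof -
    have "\<exists>v. v \<noteq> 0 \<and> M *v v = l *\<^sub>R v"
      using that by simp
    then show ?thesis
      unfolding f_def by (rule someI_ex)
  qed
  have orth: "f l1 \<bullet> f l2 = 0" if "l1 \<in> ?S" "l2 \<in> ?S" "l1 \<noteq> l2" for l1 l2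
  proof -
    have "l1 * (f l1 \<bullet> f l2) = (M *v f l1) \<bullet> f l2"
      using f[OF that(1)] by simp
    also have "\<dots> = f l1 \<bullet> (M *v f l2)"
      by (rule symmetric_matrix_inner[OF M_sym])
    also have "\<dots> = l2 * (f l1 \<bullet> f l2)"
      using f[OF that(2)] by simp
    finally show ?thesis
      using that(3) by simp
  qed
  have inj: "inj_on f ?S"
  proof (rule inj_onI, rule ccontr)
    fix l1 l2 assume l: "l1 \<in> ?S" "l2 \<in> ?S" "f l1 = f l2" "l1 \<noteq> l2"
    then have "f l1 \<bullet> f l1 = 0"
      using orth[OF l(1,2,4)] by simp
    then show False
      using f[OF l(1)] by simp
  qed
  have "pairwise orthogonal (f ` ?S)"
  proof (rule pairwiseI)
    fix x y assume "x \<in> f ` ?S" "y \<in> f ` ?S" "x \<noteq> y"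
    then obtain l1 l2 where "x = f l1" "y = f l2" "l1 \<in> ?S" "l2 \<in> ?S" "l1 \<noteq> l2"
      by blast
    then show "orthogonal x y"
      using orth[of l1 l2] by (simp add: orthogonal_def)
  qed
  moreover have "0 \<notin> f ` ?S"
  proof
    assume "0 \<in> f ` ?S"
    then obtain l where "0 = f l" "l \<in> ?S"
      by (rule imageE)
    then show False
      using f[of l] by simp
  qed
  ultimately have "independent (f ` ?S)"
    by (rule pairwise_orthogonal_independent)
  then have "finite (f ` ?S)"
    by (rule independent_imp_finite)
  then show ?thesis
    using inj by (rule finite_imageD)
qed

lemma sigma_min_attained:
  fixes X :: "real^'r^'n"
  obtains u where "norm u = 1" "(norm (X *v u))\<^sup>2 = (sigma_min X)\<^sup>2"
proof -
  define M where "M = transpose X ** X"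
  define S where "S = {l. \<exists>v. v \<noteq> 0 \<and> M *v v = l *\<^sub>R v}"
  have M_sym: "transpose M = M"
    by (simp add: M_def matrix_transpose_mul)
  have "Min S \<in> S"
    using symmetric_matrix_eigenvalues_finite[OF M_sym] symmetric_matrix_has_eigenvector[OF M_sym]
    by (intro Min_in) (auto simp: S_def)
  then obtain v where v: "v \<noteq> 0" "M *v v = Min S *\<^sub>R v"
    by (auto simp: S_def)
  have Xv: "(norm (X *v v))\<^sup>2 = Min S * (norm v)\<^sup>2"
    using v(2) inner_transpose_mul_self[of v X v] by (simp add: M_def dot_square_norm)
  then have "0 \<le> Min S * (norm v)\<^sup>2"
    by (metis zero_le_power2)
  then have "0 \<le> Min S"
    using v(1) by (simp add: zero_le_mult_iff)
  then have "(sigma_min X)\<^sup>2 = Min S"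
    by (simp add: sigma_min_def S_def M_def)
  moreover have "norm ((1 / norm v) *\<^sub>R v) = 1"
    using v(1) by simp
  moreover have "(norm (X *v ((1 / norm v) *\<^sub>R v)))\<^sup>2 = Min S"
    using Xv v(1) by (simp add: matrix_vector_mult_scaleR power_divide)
  ultimately show ?thesis
    by (intro that) simp_all
qed

section \<open>Second-order conditions for \<open>f\<^sub>A\<close>\<close>

definition meas_inner :: "nat \<Rightarrow> (real^'n^'n \<Rightarrow> nat \<Rightarrow> real) \<Rightarrow> real^'n^'n \<Rightarrow> real^'n^'n \<Rightarrow> real"
  where "meas_inner m A M N = (\<Sum>i<m. A M i * A N i)"

lemma sqn_eq_meas_inner: "sqn m A M = meas_inner m A M M"
  by (simp add: sqn_def meas_inner_def power2_eq_square)

lemma is_linmapD: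
  assumes "is_linmap m A" "i < m"
  shows "A (M + N) i = A M i + A N i" "A (c *\<^sub>R M) i = c * A M i"
  using assms linear_add[of "\<lambda>E. A E i"] linear_scale[of "\<lambda>E. A E i"]
  by (auto simp: is_linmap_def)

lemma linear_meas_inner:
  assumes "is_linmap m A"
  shows "linear (meas_inner m A M)"
  by (rule linearI)
    (simp_all add: meas_inner_def is_linmapD[OF assms] algebra_simps sum.distrib sum_distrib_left)

lemma meas_inner_quadratic:
  assumes "is_linmap m A"
  shows "meas_inner m A (s *\<^sub>R M + t *\<^sub>R N) (s *\<^sub>R M + t *\<^sub>R N)
    = s\<^sup>2 * meas_inner m A M M + 2 * s * t * meas_inner m A M N + t\<^sup>2 * meas_inner m A N N"
proof -
  have "meas_inner m A (s *\<^sub>R M + t *\<^sub>R N) (s *\<^sub>R M + t *\<^sub>R N)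
      = (\<Sum>i<m. (s * A M i + t * A N i) * (s * A M i + t * A N i))"
    by (simp add: meas_inner_def is_linmapD[OF assms])
  also have "\<dots> = s\<^sup>2 * meas_inner m A M M + 2 * s * t * meas_inner m A M N + t\<^sup>2 * meas_inner m A N N"
    by (simp add: meas_inner_def sum.distrib sum_distrib_left algebra_simps power2_eq_square)
  finally show ?thesis .
qed

lemma has_derivative_grad:
  fixes f :: "'a::euclidean_space \<Rightarrow> real"
  assumes "f differentiable (at x)"
  shows "(f has_derivative (\<lambda>v. grad f x \<bullet> v)) (at x)"
proof -
  obtain D where D: "(f has_derivative D) (at x)"
    using assms by (auto simp: differentiable_def)
  have "linear D"
    using D by (rule has_derivative_linear)
  have "(\<lambda>v. adjoint D 1 \<bullet> v) = D"
  proof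
    fix v
    show "adjoint D 1 \<bullet> v = D v"
      using adjoint_works[OF \<open>linear D\<close>, of v 1] by (simp add: inner_commute)
  qed
  with D have ex: "(f has_derivative (\<lambda>v. adjoint D 1 \<bullet> v)) (at x)"
    by simp
  have unique: "g = adjoint D 1" if "(f has_derivative (\<lambda>v. g \<bullet> v)) (at x)" for g
  proof -
    have "(\<lambda>v. g \<bullet> v) = (\<lambda>v. adjoint D 1 \<bullet> v)"
      using that ex by (rule has_derivative_unique)
    then show ?thesis
      by (subst vector_eq_rdot[symmetric]) (simp add: fun_eq_iff)
  qed
  show ?thesis
    unfolding grad_def using ex unique by (rule theI)
qed

lemma second_order_point_along_line:
  fixes f :: "'a::euclidean_space \<Rightarrow> real"
  assumes diff: "\<And>y. f differentiable (at y)" and sop: "second_order_point f x"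
    and D1: "\<And>t. ((\<lambda>t. f (x + t *\<^sub>R v)) has_real_derivative \<phi>' t) (at t)"
    and D2: "(\<phi>' has_real_derivative c) (at 0)"
  shows "\<phi>' 0 = 0" and "0 \<le> c"
proof -
  define \<gamma> where "\<gamma> t = x + t *\<^sub>R v" for t :: real
  have \<gamma>: "(\<gamma> has_derivative (\<lambda>h. h *\<^sub>R v)) (at t)" for t
    unfolding \<gamma>_def by (auto intro!: derivative_eq_intros)
  have \<phi>': "((f \<circ> \<gamma>) has_derivative (\<lambda>h. \<phi>' t * h)) (at t)" for t
    using D1[of t] by (simp add: has_field_derivative_def \<gamma>_def o_def)
  obtain H where f0: "(f has_derivative (\<lambda>v. 0)) (at x)"
    and H: "(grad f has_derivative H) (at x)" "\<And>w. 0 \<le> w \<bullet> H w"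
    using sop by (auto simp: second_order_point_def)
  have "((f \<circ> \<gamma>) has_derivative (\<lambda>h. 0)) (at 0)"
    using diff_chain_at[OF \<gamma>, of f "\<lambda>v. 0"] f0 by (simp add: \<gamma>_def o_def)
  then have "(\<lambda>h::real. 0::real) = (\<lambda>h. \<phi>' 0 * h)"
    using \<phi>' by (rule has_derivative_unique)
  from fun_cong[OF this, of 1] show "\<phi>' 0 = 0"
    by simp
  have grad_\<gamma>: "grad f (\<gamma> t) \<bullet> v = \<phi>' t" for t
  proof -
    have "((f \<circ> \<gamma>) has_derivative (\<lambda>h. h * (grad f (\<gamma> t) \<bullet> v))) (at t)"
      using diff_chain_at[OF \<gamma> has_derivative_grad[OF diff]] by (simp add: o_def)
    then have "(\<lambda>h. h * (grad f (\<gamma> t) \<bullet> v)) = (\<lambda>h. \<phi>' t * h)"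
      using \<phi>' by (rule has_derivative_unique)
    from fun_cong[OF this, of 1] show ?thesis
      by simp
  qed
  have "((\<lambda>t. grad f (\<gamma> t) \<bullet> v) has_derivative (\<lambda>h. H (h *\<^sub>R v) \<bullet> v)) (at 0)"
    using has_derivative_inner_left[OF diff_chain_at[OF \<gamma>, of "grad f" H]] H(1)
    by (simp add: \<gamma>_def o_def)
  then have "(\<phi>' has_derivative (\<lambda>h. H (h *\<^sub>R v) \<bullet> v)) (at 0)"
    by (simp add: grad_\<gamma>)
  then have "(\<lambda>h. H (h *\<^sub>R v) \<bullet> v) = (\<lambda>h. c * h)"
    using D2 unfolding has_field_derivative_def by (rule has_derivative_unique)
  from fun_cong[OF this, of 1] have "c = H v \<bullet> v"
    by simp
  then show "0 \<le> c"
    using H(2)[of v] by (simp add: inner_commute)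
qed

lemma has_derivative_mul_transpose:
  "((\<lambda>U::real^'r^'n. U ** transpose U) has_derivative (\<lambda>H. U ** transpose H + H ** transpose U)) (at U)"
proof -
  have "bilinear (\<lambda>(U::real^'r^'n) W. U ** transpose W)"
    unfolding bilinear_def
    by (auto intro!: linearI simp: matrix_add_ldistrib matrix_add_rdistrib transpose_add
        transpose_scalar matrix_scalar_ac scalar_matrix_assoc)
  then have "bounded_bilinear (\<lambda>(U::real^'r^'n) W. U ** transpose W)"
    by (rule bilinear_conv_bounded_bilinear[THEN iffD1])
  from bounded_bilinear.FDERIV[OF this has_derivative_ident has_derivative_ident]
  show ?thesis by simp
qed

lemma fA_differentiable:
  fixes Z :: "real^'r^'n"
  assumes "is_linmap m A"
  shows "fA m A Z differentiable (at U)"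
proof -
  have "(\<lambda>U. A (U ** transpose U - Z ** transpose Z) i) differentiable (at U)" if "i < m" for i
  proof -
    have "bounded_linear (\<lambda>E. A E i)"
      using assms that by (simp add: is_linmap_def linear_conv_bounded_linear)
    moreover have "(\<lambda>U::real^'r^'n. U ** transpose U - Z ** transpose Z) differentiable (at U)"
      using has_derivative_diff[OF has_derivative_mul_transpose has_derivative_const]
      unfolding differentiable_def by blast
    ultimately show ?thesis
      by (rule differentiable_compose[OF bounded_linear_imp_differentiable])
  qed
  then show ?thesis
    unfolding fA_def sqn_def by (auto intro!: differentiable_sum differentiable_power)
qed

lemma fA_along_line:
  fixes X Z V :: "real^'r^'n"
  assumes "is_linmap m A"
  shows "fA m A Z (X + t *\<^sub>R V) = (\<Sum>i<m. (A (X ** transpose X - Z ** transpose Z) i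
    + t * A (X ** transpose V + V ** transpose X) i + t\<^sup>2 * A (V ** transpose V) i)\<^sup>2)"
proof -
  define E where "E = X ** transpose X - Z ** transpose Z"
  define S where "S = X ** transpose V + V ** transpose X"
  have "(X + t *\<^sub>R V) ** transpose (X + t *\<^sub>R V) - Z ** transpose Z
      = E + t *\<^sub>R S + t\<^sup>2 *\<^sub>R (V ** transpose V)"
    by (simp add: E_def S_def vec_eq_iff matrix_matrix_mult_def transpose_def sum.distrib
        sum_distrib_left algebra_simps power2_eq_square sum_subtractf)
  then show ?thesis
    unfolding E_def[symmetric] S_def[symmetric]
    by (simp add: fA_def sqn_def is_linmapD[OF assms])
qed

lemma fA_second_order_conditions:
  fixes X Z V :: "real^'r^'n"
  assumes lin: "is_linmap m A" and sop: "second_order_point (fA m A Z) X"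
  shows "meas_inner m A (X ** transpose X - Z ** transpose Z) (X ** transpose V + V ** transpose X) = 0"
    and "0 \<le> meas_inner m A (X ** transpose V + V ** transpose X) (X ** transpose V + V ** transpose X)
        + 2 * meas_inner m A (X ** transpose X - Z ** transpose Z) (V ** transpose V)"
proof -
  define a where "a i = A (X ** transpose X - Z ** transpose Z) i" for i
  define s where "s i = A (X ** transpose V + V ** transpose X) i" for i
  define q where "q i = A (V ** transpose V) i" for i
  define \<phi>' where "\<phi>' t = (\<Sum>i<m. 2 * (a i + t * s i + t\<^sup>2 * q i) * (s i + 2 * t * q i))" for t
  have D1: "((\<lambda>t. fA m A Z (X + t *\<^sub>R V)) has_real_derivative \<phi>' t) (at t)" for t
    unfolding fA_along_line[OF lin] a_def[symmetric] s_def[symmetric] q_def[symmetric] \<phi>'_def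
    by (auto intro!: derivative_eq_intros simp: power2_eq_square algebra_simps)
  have D2: "(\<phi>' has_real_derivative (\<Sum>i<m. 2 * (s i * s i + 2 * a i * q i))) (at 0)"
    unfolding \<phi>'_def by (auto intro!: derivative_eq_intros simp: power2_eq_square algebra_simps)
  note along = second_order_point_along_line[OF fA_differentiable[OF lin] sop D1 D2]
  from along(1) show "meas_inner m A (X ** transpose X - Z ** transpose Z)
      (X ** transpose V + V ** transpose X) = 0"
    by (simp add: \<phi>'_def meas_inner_def a_def s_def sum_distrib_left[symmetric] mult.assoc)
  from along(2) show "0 \<le> meas_inner m A (X ** transpose V + V ** transpose X)
      (X ** transpose V + V ** transpose X)
      + 2 * meas_inner m A (X ** transpose X - Z ** transpose Z) (V ** transpose V)"
    by (simp add: meas_inner_def a_def s_def q_def sum.distrib sum_distrib_left[symmetric]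
        algebra_simps)
qed

section \<open>RIP on a plane\<close>

text \<open>The RIP inequalities on the plane spanned by two unit vectors with inner product \<open>-a\<close>,
  written in the coordinates \<open>(s, t)\<close> of that basis; \<open>x11, x12, x22\<close> are the entries of the
  Gram matrix of the measured inner product, normalised by \<open>\<nu>\<close>.\<close>

definition quad_rip :: "real \<Rightarrow> real \<Rightarrow> real \<Rightarrow> real \<Rightarrow> real \<Rightarrow> bool" where
  "quad_rip d a x11 x12 x22 \<longleftrightarrow> (\<forall>s t.
     (1 - d) * (s\<^sup>2 - 2 * a * s * t + t\<^sup>2) \<le> s\<^sup>2 * x11 + 2 * s * t * x12 + t\<^sup>2 * x22 \<and>
     s\<^sup>2 * x11 + 2 * s * t * x12 + t\<^sup>2 * x22 \<le> (1 + d) * (s\<^sup>2 - 2 * a * s * t + t\<^sup>2))"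

lemma quad_ripD:
  assumes "quad_rip d a x11 x12 x22"
  shows "(1 - d) * (s\<^sup>2 - 2 * a * s * t + t\<^sup>2) \<le> s\<^sup>2 * x11 + 2 * s * t * x12 + t\<^sup>2 * x22"
    and "s\<^sup>2 * x11 + 2 * s * t * x12 + t\<^sup>2 * x22 \<le> (1 + d) * (s\<^sup>2 - 2 * a * s * t + t\<^sup>2)"
  using assms by (simp_all add: quad_rip_def)

text \<open>Evaluate the bounds at \<open>(s, t) = (K + 1, a)\<close> and \<open>(K - 1, -a)\<close>, where
  \<open>K = \<surd>(1 - a\<^sup>2)\<close>: because \<open>x11 = -a x12\<close> the form takes the same value at both points,
  while \<open>s\<^sup>2 - 2ast + t\<^sup>2\<close> equals \<open>2K\<^sup>2(1 + K)\<close> and \<open>2K\<^sup>2(1 - K)\<close> respectively.\<close>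

lemma quad_rip_sqrt_le:
  assumes "0 \<le> a" "a \<le> 1" "0 \<le> d" and g: "x11 = - a * x12"
    and rip: "quad_rip d a x11 x12 x22"
  shows "sqrt (1 - a\<^sup>2) \<le> d"
proof -
  define K where "K = sqrt (1 - a\<^sup>2)"
  have "a\<^sup>2 \<le> 1"
    using assms(1,2) by (simp add: power_le_one)
  then have hK: "K\<^sup>2 = 1 - a\<^sup>2"
    by (simp add: K_def)
  have "(1 - d) * ((K + 1)\<^sup>2 - 2 * a * (K + 1) * a + a\<^sup>2)
      \<le> (K + 1)\<^sup>2 * x11 + 2 * (K + 1) * a * x12 + a\<^sup>2 * x22"
    by (rule quad_ripD(1)[OF rip])
  also have "\<dots> = (K - 1)\<^sup>2 * x11 + 2 * (K - 1) * (- a) * x12 + (- a)\<^sup>2 * x22"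
    using g by algebra
  also have "\<dots> \<le> (1 + d) * ((K - 1)\<^sup>2 - 2 * a * (K - 1) * (- a) + (- a)\<^sup>2)"
    by (rule quad_ripD(2)[OF rip])
  finally have "(1 - d) * ((K + 1)\<^sup>2 - 2 * a * (K + 1) * a + a\<^sup>2)
      \<le> (1 + d) * ((K - 1)\<^sup>2 - 2 * a * (K - 1) * (- a) + (- a)\<^sup>2)" .
  moreover have "(1 + d) * ((K - 1)\<^sup>2 - 2 * a * (K - 1) * (- a) + (- a)\<^sup>2)
      - (1 - d) * ((K + 1)\<^sup>2 - 2 * a * (K + 1) * a + a\<^sup>2) = 4 * (K\<^sup>2 * (d - K))"
    using hK by algebra
  ultimately have "0 \<le> K\<^sup>2 * (d - K)"
    by linarith
  then show ?thesis
    using \<open>0 \<le> d\<close> by (cases "K = 0") (auto simp: K_def[symmetric] zero_le_mult_iff)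
qed

lemma below_gamma_threshold:
  assumes a: "0 < a" "a \<le> 1" and b: "0 \<le> b" "b < a / (1 + sqrt (1 - a\<^sup>2))"
  shows "a * b < 1" and "b < 1" and "2 * b - a - a * b\<^sup>2 < 0"
proof -
  define K where "K = sqrt (1 - a\<^sup>2)"
  have "a\<^sup>2 \<le> 1"
    using a by (simp add: power_le_one)
  then have K: "0 \<le> K" "K\<^sup>2 = 1 - a\<^sup>2"
    by (simp_all add: K_def)
  have "b < a / (1 + K)"
    using b(2) by (simp add: K_def)
  then have bK: "b * (1 + K) < a"
    using K(1) by (simp add: pos_less_divide_eq)
  have "a * b * (1 + K) < a * a"
    using mult_strict_left_mono[OF bK a(1)] by (simp add: mult.assoc)
  also have "a * a = (1 - K) * (1 + K)"
    using K(2) by algebra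
  finally have abK: "a * b < 1 - K"
    using K(1) by simp
  then show "a * b < 1"
    using K(1) by linarith
  have "b \<le> b * (1 + K)"
    using b(1) K(1) by (simp add: algebra_simps)
  then show "b < 1"
    using bK a(2) by linarith
  have "K\<^sup>2 < (1 - a * b)\<^sup>2"
    using abK K(1) by (simp add: power_strict_mono)
  then have "0 < a * (a + a * b\<^sup>2 - 2 * b)"
    using K(2) by (simp add: power2_eq_square algebra_simps)
  then show "2 * b - a - a * b\<^sup>2 < 0"
    using a(1) by (simp add: zero_less_mult_iff)
qed

text \<open>Evaluate the lower bound at \<open>(1 - ab)(1, b)\<close> and the upper bound at \<open>b(a - b, 1 - ab)\<close>:
  there \<open>s\<^sup>2 - 2ast + t\<^sup>2\<close> is a multiple of \<open>D = 1 - 2ab + b\<^sup>2\<close>, and because \<open>x11 = -a x12\<close>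
  the two values of the form differ by \<open>x12 D k\<close> with \<open>k = 2b - a - ab\<^sup>2 < 0\<close>,
  so the lower bound on \<open>x12\<close> applies.\<close>

lemma quad_rip_ratio_le:
  assumes a: "0 < a" "a \<le> 1" and b: "0 \<le> b" "b < a / (1 + sqrt (1 - a\<^sup>2))"
    and g: "x11 = - a * x12" and hs: "- (1 + d) * b \<le> x12"
    and rip: "quad_rip d a x11 x12 x22"
  shows "(1 - 2 * a * b + b\<^sup>2) / (1 - b\<^sup>2) \<le> d"
proof -
  note thr = below_gamma_threshold[OF a b]
  define D where "D = 1 - 2 * a * b + b\<^sup>2"
  define k where "k = 2 * b - a - a * b\<^sup>2"
  define p1 p2 q1 q2 where "p1 = 1 - a * b" and "p2 = (1 - a * b) * b"
    and "q1 = b * (a - b)" and "q2 = b * (1 - a * b)"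
  have "0 < D"
  proof -
    have "0 \<le> b\<^sup>2 * (1 - a\<^sup>2)"
      using a by (simp add: power_le_one)
    moreover have "0 < (1 - a * b)\<^sup>2"
      using thr(1) by simp
    moreover have "D = (1 - a * b)\<^sup>2 + b\<^sup>2 * (1 - a\<^sup>2)"
      unfolding D_def by algebra
    ultimately show ?thesis
      by linarith
  qed
  have "p1\<^sup>2 - 2 * a * p1 * p2 + p2\<^sup>2 = (1 - a * b)\<^sup>2 * D"
    unfolding p1_def p2_def D_def by algebra
  then have "(1 - d) * ((1 - a * b)\<^sup>2 * D) \<le> p1\<^sup>2 * x11 + 2 * p1 * p2 * x12 + p2\<^sup>2 * x22"
    using quad_ripD(1)[OF rip, of p1 p2] by simp
  moreover have "q1\<^sup>2 - 2 * a * q1 * q2 + q2\<^sup>2 = b\<^sup>2 * (1 - a\<^sup>2) * D"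
    unfolding q1_def q2_def D_def by algebra
  then have "q1\<^sup>2 * x11 + 2 * q1 * q2 * x12 + q2\<^sup>2 * x22 \<le> (1 + d) * (b\<^sup>2 * (1 - a\<^sup>2) * D)"
    using quad_ripD(2)[OF rip, of q1 q2] by simp
  moreover have "(p1\<^sup>2 * x11 + 2 * p1 * p2 * x12 + p2\<^sup>2 * x22)
      - (q1\<^sup>2 * x11 + 2 * q1 * q2 * x12 + q2\<^sup>2 * x22) = x12 * (D * k)"
    using g unfolding p1_def p2_def q1_def q2_def D_def k_def by algebra
  moreover have "D * k \<le> 0"
    using mult_pos_neg[OF \<open>0 < D\<close> thr(3)[folded k_def]] by simp
  then have "x12 * (D * k) \<le> (- (1 + d) * b) * (D * k)"
    using hs by (intro mult_right_mono_neg)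
  ultimately have "D * ((1 - d) * (1 - a * b)\<^sup>2 - (1 + d) * (b\<^sup>2 * (1 - a\<^sup>2)))
      \<le> D * (- (1 + d) * b * k)"
    by (simp add: algebra_simps)
  then have "(1 - d) * (1 - a * b)\<^sup>2 - (1 + d) * (b\<^sup>2 * (1 - a\<^sup>2)) \<le> - (1 + d) * b * k"
    using \<open>0 < D\<close> by simp
  moreover have "- (1 + d) * b * k - ((1 - d) * (1 - a * b)\<^sup>2 - (1 + d) * (b\<^sup>2 * (1 - a\<^sup>2)))
      = (1 - a * b) * (d * (1 - b\<^sup>2) - D)"
    unfolding k_def D_def by algebra
  ultimately have "0 \<le> (1 - a * b) * (d * (1 - b\<^sup>2) - D)"
    by linarith
  then have "0 \<le> d * (1 - b\<^sup>2) - D"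
    using thr(1) by (simp add: zero_le_mult_iff)
  moreover have "0 < 1 - b\<^sup>2"
    using thr(2) b(1) by (simp add: power_less_one_iff abs_square_less_1)
  ultimately show ?thesis
    unfolding D_def[symmetric] by (simp add: divide_le_eq)
qed

lemma gamma_le_of_quad_rip:
  assumes "0 \<le> a" "a \<le> 1" "0 \<le> b" "0 \<le> d" "x11 = - a * x12" "- (1 + d) * b \<le> x12"
    and "quad_rip d a x11 x12 x22"
  shows "gamma a b \<le> d"
proof (cases "b \<ge> a / (1 + sqrt (1 - a\<^sup>2))")
  case True
  then show ?thesis
    using quad_rip_sqrt_le[of a d x11 x12 x22] assms by (simp add: gamma_def)
next
  case False
  moreover have "0 < a"
    using False assms(1,3) by (cases "a = 0") auto
  ultimately show ?thesis
    using quad_rip_ratio_le[of a b x11 x12 d x22] assms by (simp add: gamma_def)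
qed

section \<open>Spurious second-order points\<close>

locale spurious_point =
  fixes m :: nat and A :: "real^'n^'n \<Rightarrow> nat \<Rightarrow> real" and X Z :: "real^'r^'n"
    and d \<nu> :: real
  assumes linmap: "is_linmap m A"
    and second_order: "second_order_point (fA m A Z) X"
    and not_global: "X ** transpose X \<noteq> Z ** transpose Z"
    and d_nonneg: "0 \<le> d" and d_less_1: "d < 1" and \<nu>_pos: "0 < \<nu>"
    and rip: "\<And>M. rank M \<le> CARD('r) + rank Z \<Longrightarrow>
      (1 - d) * (norm M)\<^sup>2 \<le> (1/\<nu>) * sqn m A M \<and> (1/\<nu>) * sqn m A M \<le> (1 + d) * (norm M)\<^sup>2"
begin

definition E :: "real^'n^'n" where
  "E = X ** transpose X - Z ** transpose Z"

definition W :: "real^'n^'n" where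
  "W = Zperp X Z ** transpose (Zperp X Z)"

lemma rip_col_sum:
  assumes "M \<in> col_sum_matrices X Z"
  shows "(1 - d) * (norm M)\<^sup>2 \<le> meas_inner m A M M / \<nu>"
    and "meas_inner m A M M / \<nu> \<le> (1 + d) * (norm M)\<^sup>2"
  using rip[OF rank_col_sum_matrices[OF assms]] by (simp_all add: sqn_eq_meas_inner)

lemma E_col_sum: "E \<in> col_sum_matrices X Z"
  unfolding E_def
  by (rule subspace_diff[OF subspace_col_sum_matrices col_sum_matrices_left col_sum_matrices_right])

lemma W_col_sum: "W \<in> col_sum_matrices X Z"
  unfolding W_def by (rule col_sum_matrices_Zperp)

lemma meas_inner_E_E: "meas_inner m A E E = - meas_inner m A E W"
proof -
  have "transpose (E + W) = E + W"
    by (simp add: E_def W_def transpose_add transpose_diff matrix_transpose_mul)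
  moreover have "perp_proj X ** W ** perp_proj X
      = (perp_proj X ** Zperp X Z) ** transpose (perp_proj X ** Zperp X Z)"
    by (simp add: W_def matrix_transpose_mul perp_proj_symmetric matrix_mul_assoc)
  then have "perp_proj X ** W ** perp_proj X = W"
    by (simp add: perp_proj_mul_Zperp W_def)
  then have "perp_proj X ** (E + W) ** perp_proj X = 0"
    using perp_proj_sandwich[of X Z]
    by (simp add: E_def[symmetric] W_def[symmetric] matrix_add_ldistrib matrix_add_rdistrib)
  ultimately obtain V where "E + W = X ** transpose V + V ** transpose X"
    using tangent_of_perp_sandwich_zero by blast
  then have "meas_inner m A E (E + W) = 0"
    using fA_second_order_conditions(1)[OF linmap second_order] by (simp add: E_def)
  then show ?thesis
    by (simp add: linear_add[OF linear_meas_inner[OF linmap]])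
qed

lemma W_nonzero: "W \<noteq> 0"
proof
  assume "W = 0"
  then have "meas_inner m A E E = 0"
    using meas_inner_E_E linear_0[OF linear_meas_inner[OF linmap]] by simp
  then have "(1 - d) * (norm E)\<^sup>2 \<le> 0"
    using rip_col_sum(1)[OF E_col_sum] by simp
  moreover have "E \<noteq> 0"
    using not_global by (simp add: E_def)
  ultimately show False
    using d_less_1 by (simp add: mult_le_0_iff)
qed

text \<open>The Hessian condition in the direction \<open>z u\<^sup>T\<close>, where \<open>u\<close> is a unit vector with
  \<open>|X u| = \<sigma>\<^sub>m\<^sub>i\<^sub>n(X)\<close>; since \<open>X\<^sup>T z = 0\<close>, RIP bounds the curvature term by \<open>2 \<sigma>\<^sub>m\<^sub>i\<^sub>n(X)\<^sup>2 |z|\<^sup>2\<close>.\<close>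

lemma meas_inner_E_column_lower:
  assumes z: "z = Zperp X Z *v c"
  shows "- (\<nu> * (1 + d) * (sigma_min X)\<^sup>2 * (norm z)\<^sup>2) \<le> meas_inner m A E (outer z z)"
proof -
  obtain u where u: "norm u = 1" "(norm (X *v u))\<^sup>2 = (sigma_min X)\<^sup>2"
    by (rule sigma_min_attained)
  define V where "V = outer z u"
  define S where "S = X ** transpose V + V ** transpose X"
  have XV: "X ** transpose V = outer (X *v u) z"
    by (simp add: V_def transpose_outer matrix_mul_outer)
  have S: "S = outer (X *v u) z + outer z (X *v u)"
    unfolding S_def XV by (simp add: V_def outer_mul_transpose)
  have VV: "V ** transpose V = outer z z"
    using u(1) by (simp add: V_def transpose_outer outer_mul_outer dot_square_norm)
  have "(X *v u) \<bullet> z = (transpose X *v z) \<bullet> u"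
    by (simp add: dot_lmul_matrix inner_commute[of "X *v u"])
  also have "transpose X *v z = (transpose X ** Zperp X Z) *v c"
    by (simp only: z matrix_vector_mul_assoc)
  finally have orth: "(X *v u) \<bullet> z = 0"
    by (simp add: transpose_mul_Zperp)
  have "S \<in> col_sum_matrices X Z"
  proof -
    have "outer (X *v u) z = X ** outer u z" "outer z (X *v u) = Zperp X Z ** outer c (X *v u)"
      by (simp_all add: matrix_mul_outer z)
    then show ?thesis
      unfolding S
      using subspace_add[OF subspace_col_sum_matrices col_sum_matrices_left col_sum_matrices_Zperp]
      by simp
  qed
  then have "meas_inner m A S S \<le> \<nu> * ((1 + d) * (norm S)\<^sup>2)"
    using rip_col_sum(2) \<nu>_pos by (simp add: divide_le_eq mult.commute)
  moreover have "(norm S)\<^sup>2 = 2 * (sigma_min X)\<^sup>2 * (norm z)\<^sup>2"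
    using norm_outer_plus_transpose[OF orth] u(2) by (simp add: S)
  moreover have "0 \<le> meas_inner m A S S + 2 * meas_inner m A E (outer z z)"
    using fA_second_order_conditions(2)[OF linmap second_order, of V]
    by (simp add: S_def E_def VV)
  ultimately show ?thesis
    by (simp add: algebra_simps)
qed

lemma meas_inner_E_W_lower:
  "- (\<nu> * (1 + d) * (sigma_min X)\<^sup>2 * trace W) \<le> meas_inner m A E W"
proof -
  define z where "z k = Zperp X Z *v axis k 1" for k
  have "- (\<nu> * (1 + d) * (sigma_min X)\<^sup>2 * trace W)
      = (\<Sum>k\<in>UNIV. - (\<nu> * (1 + d) * (sigma_min X)\<^sup>2 * (norm (z k))\<^sup>2))"
    by (simp add: W_def trace_mul_transpose z_def sum_distrib_left sum_negf)
  also have "\<dots> \<le> (\<Sum>k\<in>UNIV. meas_inner m A E (outer (z k) (z k)))"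
    by (intro sum_mono meas_inner_E_column_lower) (simp add: z_def)
  also have "\<dots> = meas_inner m A E (\<Sum>k\<in>UNIV. outer (z k) (z k))"
    by (rule linear_sum[OF linear_meas_inner[OF linmap], symmetric])
  also have "\<dots> = meas_inner m A E W"
    by (simp add: W_def z_def sum_outer_columns)
  finally show ?thesis .
qed

lemma quad_rip_E_W:
  "quad_rip d (norm W / norm E) (meas_inner m A E E / (\<nu> * (norm E)\<^sup>2))
     (meas_inner m A E W / (\<nu> * norm E * norm W)) (meas_inner m A W W / (\<nu> * (norm W)\<^sup>2))"
  unfolding quad_rip_def
proof (intro allI)
  fix s t
  have e: "0 < norm E"
    using not_global by (simp add: E_def)
  have w: "0 < norm W"
    using W_nonzero by simp
  define N where "N = (s / norm E) *\<^sub>R E + (t / norm W) *\<^sub>R W"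
  have "N \<in> col_sum_matrices X Z"
    unfolding N_def using subspace_col_sum_matrices E_col_sum W_col_sum
    by (intro subspace_add subspace_scale)
  moreover have "(norm N)\<^sup>2 = s\<^sup>2 - 2 * (norm W / norm E) * s * t + t\<^sup>2"
  proof -
    have "(norm N)\<^sup>2 = (s / norm E)\<^sup>2 * (norm E)\<^sup>2 + 2 * (s / norm E) * (t / norm W) * (E \<bullet> W)
        + (t / norm W)\<^sup>2 * (norm W)\<^sup>2"
      unfolding N_def by (rule power2_norm_scaleR_add)
    then show ?thesis
      using e w inner_Zperp_outer[of X Z]
      by (simp add: E_def[symmetric] W_def[symmetric] field_simps power2_eq_square)
  qed
  moreover have "meas_inner m A N N / \<nu> = s\<^sup>2 * (meas_inner m A E E / (\<nu> * (norm E)\<^sup>2))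
      + 2 * s * t * (meas_inner m A E W / (\<nu> * norm E * norm W))
      + t\<^sup>2 * (meas_inner m A W W / (\<nu> * (norm W)\<^sup>2))"
    using e w \<nu>_pos
    by (simp add: N_def meas_inner_quadratic[OF linmap] field_simps power2_eq_square)
  ultimately show "(1 - d) * (s\<^sup>2 - 2 * (norm W / norm E) * s * t + t\<^sup>2)
      \<le> s\<^sup>2 * (meas_inner m A E E / (\<nu> * (norm E)\<^sup>2))
        + 2 * s * t * (meas_inner m A E W / (\<nu> * norm E * norm W))
        + t\<^sup>2 * (meas_inner m A W W / (\<nu> * (norm W)\<^sup>2)) \<and>
      s\<^sup>2 * (meas_inner m A E E / (\<nu> * (norm E)\<^sup>2))
        + 2 * s * t * (meas_inner m A E W / (\<nu> * norm E * norm W))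
        + t\<^sup>2 * (meas_inner m A W W / (\<nu> * (norm W)\<^sup>2))
      \<le> (1 + d) * (s\<^sup>2 - 2 * (norm W / norm E) * s * t + t\<^sup>2)"
    using rip_col_sum by metis
qed

lemma delta_lb_le: "delta_lb X Z \<le> d"
proof -
  define e where "e = norm E"
  define w where "w = norm W"
  have e: "0 < e"
    using not_global by (simp add: e_def E_def)
  have w: "0 < w"
    using W_nonzero by (simp add: w_def)
  have "Zperp X Z \<noteq> 0"
    using W_nonzero by (auto simp: W_def)
  then have alpha: "alpha_lb X Z = w / e"
    and beta: "beta_lb X Z = (sigma_min X)\<^sup>2 / e * (trace W / w)"
    by (simp_all add: alpha_lb_def beta_lb_def E_def W_def e_def w_def)
  have "0 \<le> trace W"
    by (simp add: W_def trace_mul_transpose sum_nonneg)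
  have "w \<le> e"
    using norm_Zperp_outer_le[of X Z] by (simp add: e_def w_def E_def W_def)
  have "meas_inner m A E E / (\<nu> * e\<^sup>2) = - (w / e) * (meas_inner m A E W / (\<nu> * e * w))"
    using e w \<nu>_pos meas_inner_E_E by (simp add: field_simps power2_eq_square)
  moreover have "- (1 + d) * ((sigma_min X)\<^sup>2 / e * (trace W / w))
      \<le> meas_inner m A E W / (\<nu> * e * w)"
  proof -
    have "- (\<nu> * (1 + d) * (sigma_min X)\<^sup>2 * trace W) / (\<nu> * e * w)
        \<le> meas_inner m A E W / (\<nu> * e * w)"
      using meas_inner_E_W_lower by (rule divide_right_mono) (use e w \<nu>_pos in simp)
    moreover have "- (\<nu> * (1 + d) * (sigma_min X)\<^sup>2 * trace W) / (\<nu> * e * w)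
        = - (1 + d) * ((sigma_min X)\<^sup>2 / e * (trace W / w))"
      using e w \<nu>_pos by (simp add: field_simps)
    ultimately show ?thesis
      by simp
  qed
  ultimately show ?thesis
    unfolding delta_lb_def alpha beta
    using e w \<open>0 \<le> trace W\<close> \<open>w \<le> e\<close> d_nonneg quad_rip_E_W[folded e_def w_def]
    by (intro gamma_le_of_quad_rip) simp_all
qed

end

theorem theorem9:
  fixes X Z :: "real^'r^'n"
  assumes "X ** transpose X \<noteq> Z ** transpose Z"
  shows "ereal (delta_lb X Z) \<le> delta X Z"
  unfolding delta_def
proof (rule Inf_greatest)
  fix y assume "y \<in> ereal ` {d. \<exists>m (A :: real^'n^'n \<Rightarrow> nat \<Rightarrow> real). 1 \<le> m \<and> is_linmap m A \<and>
      RIP d (CARD('r) + rank Z) m A \<and> second_order_point (fA m A Z) X}"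
  then obtain d m and A :: "real^'n^'n \<Rightarrow> nat \<Rightarrow> real" where y: "y = ereal d"
    and lin: "is_linmap m A" and rip: "RIP d (CARD('r) + rank Z) m A"
    and sop: "second_order_point (fA m A Z) X"
    by blast
  from rip obtain \<nu> where "0 \<le> d" "d < 1" "0 < \<nu>" "\<And>M::real^'n^'n. rank M \<le> CARD('r) + rank Z \<Longrightarrow>
      (1 - d) * (norm M)\<^sup>2 \<le> (1/\<nu>) * sqn m A M \<and> (1/\<nu>) * sqn m A M \<le> (1 + d) * (norm M)\<^sup>2"
    unfolding RIP_def by blast
  with lin sop assms interpret spurious_point m A X Z d \<nu>
    by unfold_locales
  show "ereal (delta_lb X Z) \<le> y"
    using delta_lb_le by (simp add: y)
qed

end
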